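(* Let $(Q,\cdot)$ be a quasigroup and $e\in Q$ an element such that $(ee\cdot xz)(ey\cdot z)=xy$ for all $x,y,z\in Q$. Then for all $x,y,z\in Q$: (1) $ee=e$; (2) $ex=xe$; (3) $ex\cdot ey=e\cdot yx$; (4) $e(ey\cdot ex)=xy$; (5) $(e\cdot xz)(ey\cdot z)=xy$; (6) $x\cdot xe=ex\cdot x=e$; (7) $xy\cdot x=x\cdot yx=y$.
   Context: A quasigroup is a magma in which $ax=b$ and $ya=b$ have unique solutions for all $a,b$. Juxtaposition denotes the operation, and $ab\cdot cd$ means $(ab)(cd)$. Such $(Q,\cdot,e)$ is called a double Ward quasigroup. *)

theory Defs
  imports Main
begin

definition quasigroup :: "('a \<Rightarrow> 'a \<Rightarrow> 'a) \<Rightarrow> bool" where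
  "quasigroup m \<longleftrightarrow> (\<forall>a b. (\<exists>!x. m a x = b) \<and> (\<exists>!y. m y a = b))"

end

theory Submission
  imports Defs
begin

text \<open>Write \<open>a = e e\<close>. Taking \<open>x = e\<close> in the defining identity shows that left
  multiplication by \<open>a (e z)\<close> inverts right multiplication by \<open>z\<close>; comparing two such
  instances forces \<open>a = e\<close>. Then left and right multiplication by \<open>e\<close> are mutually inverse
  and in fact equal, so \<open>x \<mapsto> e x\<close> is an involution. Consequently left multiplication
  by \<open>z\<close> itself inverts right multiplication by \<open>z\<close>, i.e. the quasigroup is semisymmetric,
  and the remaining identities are instances of the defining one simplified by these laws.\<close>

lemma quasigroup_left_cancel:
  assumes "quasigroup m" and "m a x = m a y"
  shows "x = y"
  using assms unfolding quasigroup_def by blast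

lemma quasigroup_right_cancel:
  assumes "quasigroup m" and "m x a = m y a"
  shows "x = y"
  using assms unfolding quasigroup_def by blast

lemma quasigroup_left_solvable:
  assumes "quasigroup m"
  shows "\<exists>x. m a x = b"
  using assms unfolding quasigroup_def by blast

locale double_ward_quasigroup =
  fixes m :: "'a \<Rightarrow> 'a \<Rightarrow> 'a" (infixl "\<cdot>" 70) and e :: 'a
  assumes quasigroup: "quasigroup (\<cdot>)"
    and double_ward: "\<And>x y z. e \<cdot> e \<cdot> (x \<cdot> z) \<cdot> (e \<cdot> y \<cdot> z) = x \<cdot> y"
begin

lemma left_cancel: "a \<cdot> x = a \<cdot> y \<Longrightarrow> x = y"
  using quasigroup by (rule quasigroup_left_cancel)

lemma right_cancel: "x \<cdot> a = y \<cdot> a \<Longrightarrow> x = y"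
  using quasigroup by (rule quasigroup_right_cancel)

lemma left_inverse_of_right_mult: "e \<cdot> e \<cdot> (e \<cdot> z) \<cdot> (w \<cdot> z) = w"
proof -
  obtain y where "e \<cdot> y = w"
    using quasigroup_left_solvable[OF quasigroup] by blast
  then show ?thesis
    using double_ward[where x = e and y = y] by simp
qed

lemma e_idem: "e \<cdot> e = e"
proof -
  define p where "p z = e \<cdot> e \<cdot> (e \<cdot> z)" for z
  have inv: "p z \<cdot> (w \<cdot> z) = w" for z w
    unfolding p_def by (rule left_inverse_of_right_mult)
  define t where "t = e \<cdot> e \<cdot> e"
  have "p t \<cdot> (e \<cdot> e) = p e"
    using inv[of t "p e"] inv[of e "e \<cdot> e"] unfolding t_def by simp
  also have "p e = e \<cdot> e \<cdot> (e \<cdot> e)"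
    unfolding p_def ..
  finally have "p t = e \<cdot> e"
    by (rule right_cancel)
  moreover have "p t \<cdot> (e \<cdot> t) = e"
    by (rule inv)
  ultimately show ?thesis
    unfolding p_def by simp
qed

lemma ward_with_e: "e \<cdot> (x \<cdot> z) \<cdot> (e \<cdot> y \<cdot> z) = x \<cdot> y"
  using double_ward by (simp add: e_idem)

lemma e_mult_mult_e: "e \<cdot> (x \<cdot> e) = x"
  using left_inverse_of_right_mult[of e x] by (simp add: e_idem)

lemma e_mult_self_mult: "e \<cdot> x \<cdot> x = e"
  using left_inverse_of_right_mult[of "x \<cdot> e" e] by (simp add: e_idem e_mult_mult_e)

lemma mult_mult_e_self: "x \<cdot> (x \<cdot> e) = e"
  using e_mult_self_mult[of "x \<cdot> e"] by (simp add: e_mult_mult_e)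

lemma e_commute: "e \<cdot> x = x \<cdot> e"
  using ward_with_e[where x = x and y = e and z = "x \<cdot> e"] by (simp add: e_idem e_mult_mult_e mult_mult_e_self)

lemma e_mult_e_mult: "e \<cdot> (e \<cdot> x) = x"
  using e_mult_mult_e[of x] by (simp only: e_commute[of x])

lemma semisymmetric: "x \<cdot> (y \<cdot> x) = y"
  using left_inverse_of_right_mult[of x y] by (simp add: e_idem e_mult_e_mult)

lemma semisymmetric': "x \<cdot> y \<cdot> x = y"
  using semisymmetric[of x "x \<cdot> y"] by (rule left_cancel)

lemma e_mult_antihom: "e \<cdot> x \<cdot> (e \<cdot> y) = e \<cdot> (y \<cdot> x)"
  using ward_with_e[where x = "y \<cdot> x" and y = e and z = y] e_commute[of "y \<cdot> x"] by (simp add: e_idem semisymmetric')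

lemma e_mult_antihom_e_mult: "e \<cdot> (e \<cdot> y \<cdot> (e \<cdot> x)) = x \<cdot> y"
  by (simp add: e_mult_antihom e_mult_e_mult)

end

theorem lemma4p1:
  fixes m :: "'a \<Rightarrow> 'a \<Rightarrow> 'a" and e :: 'a
  assumes "quasigroup m"
    and "\<forall>x y z. m (m (m e e) (m x z)) (m (m e y) z) = m x y"
  shows "m e e = e
    \<and> (\<forall>x. m e x = m x e)
    \<and> (\<forall>x y. m (m e x) (m e y) = m e (m y x))
    \<and> (\<forall>x y. m e (m (m e y) (m e x)) = m x y)
    \<and> (\<forall>x y z. m (m e (m x z)) (m (m e y) z) = m x y)
    \<and> (\<forall>x. m x (m x e) = e \<and> m (m e x) x = e)
    \<and> (\<forall>x y. m (m x y) x = y \<and> m x (m y x) = y)"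
proof -
  interpret double_ward_quasigroup m e
    using assms by unfold_locales blast+
  show ?thesis
    using e_idem e_commute e_mult_antihom e_mult_antihom_e_mult ward_with_e
      mult_mult_e_self e_mult_self_mult semisymmetric' semisymmetric
    by blast
qed

end
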